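(* Let $n\in\mathbb{N}$, $a_1,\dots,a_n\in\mathbb{N}$, and $s_0,t_0\in\mathbb{N}$ with $s_0<t_0$ and $\gcd(s_0,t_0)=1$; put $w_0=\frac{s_0}{t_0}$. Then there are unique $w_1,\dots,w_n\in\mathbb{Q}\cap(0,1)$ with $a_jw_j+w_{j-1}=1$ for $j=1,\dots,n$. Write $w_j=\frac{s_j}{t_j}$ with $s_j,t_j\in\mathbb{N}$, $\gcd(s_j,t_j)=1$, and let $\beta_j=\gcd(t_{j-1}-s_{j-1},a_j)$ and $\alpha_j=a_j/\beta_j$ for $j=1,\dots,n$. Then for $j=1,\dots,n$ $$s_j=\frac{\rho(a_{j-1},\dots,a_1)\cdot t_0+(-1)^js_0}{\beta_j\cdots\beta_1},\qquad t_j=\alpha_jt_{j-1}=\alpha_j\cdots\alpha_1\cdot t_0,$$ and $$\prod_{j=1}^n\left(\frac1{s_j}\Lambda_{t_j}-\Lambda_1\right)=(-1)^n\Lambda_1+\sum_{j=1}^n(-1)^{n-j}\frac{\beta_j\cdots\beta_1}{t_0-s_0}\Lambda_{t_j}=(-1)^nE_1+\sum_{j=1}^n(-1)^{n-j}\frac{a_j\cdots a_1}{1-w_0}E_{t_j},$$ $$\prod_{j=1}^n\left(\frac1{w_j}-1\right)=\frac{\rho(a_n,a_{n-1},\dots,a_1)+(-1)^{n-1}w_0}{1-w_0}.$$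
   Context: $\rho(x_1,\dots,x_k)=x_1\cdots x_k-x_2\cdots x_k+\dots+(-1)^{k-1}x_k+(-1)^k$, with $\rho(\emptyset)=1$. $S^{UR}$ is the set of roots of unity and $\mathbb{Q}\langle S^{UR}\rangle$ its group ring over $\mathbb{Q}$ (elements $\sum b_j\langle\zeta_j\rangle$, product $\langle\zeta_1\rangle\langle\zeta_2\rangle=\langle\zeta_1\zeta_2\rangle$). $\Lambda_m=\sum_{a=0}^{m-1}\langle e^{2\pi i a/m}\rangle$ and $E_m=\frac1m\Lambda_m$. *)

theory Defs
  imports Complex_Main "HOL-Library.Function_Algebras"
begin

definition rho :: "int list \<Rightarrow> int" where
  "rho xs = (\<Sum>i<length xs. (-1)^i * prod_list (drop i xs)) + (-1)^(length xs)"

text \<open>The group ring Q<S^UR>: elements are finitely supported functions from the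
  roots of unity (as complex numbers) to rat; sums are pointwise, the product is the
  convolution induced by the multiplication of roots of unity.\<close>
type_synonym grp_ring = "complex \<Rightarrow> rat"

definition gr_basis :: "complex \<Rightarrow> grp_ring" ("\<langle>_\<rangle>") where
  "gr_basis \<zeta> = (\<lambda>z. if z = \<zeta> then 1 else 0)"

definition gr_smult :: "rat \<Rightarrow> grp_ring \<Rightarrow> grp_ring" where
  "gr_smult c f = (\<lambda>z. c * f z)"

definition gr_mult :: "grp_ring \<Rightarrow> grp_ring \<Rightarrow> grp_ring" where
  "gr_mult f g = (\<lambda>z. \<Sum>x\<in>{x. f x \<noteq> 0}. f x * g (z / x))"

fun gr_prod :: "(nat \<Rightarrow> grp_ring) \<Rightarrow> nat \<Rightarrow> grp_ring" where
  "gr_prod F 0 = gr_basis 1"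
| "gr_prod F (Suc k) = gr_mult (gr_prod F k) (F (Suc k))"

definition Lambda :: "nat \<Rightarrow> grp_ring" where
  "Lambda m = (\<Sum>a<m. gr_basis (exp (2 * of_real pi * \<i> * of_nat a / of_nat m)))"

definition E :: "nat \<Rightarrow> grp_ring" where
  "E m = gr_smult (1 / of_nat m) (Lambda m)"

end

theory Submission
  imports Defs
begin

(* The recurrence determines w_j = (1 - w_(j-1)) / a_j one step at a time. Multiplied by
   a_1...a_j it telescopes to  a_1...a_j (1 - w_j) = rho(a_j,...,a_1) - (-1)^j w_0,  which gives
   the formula for s_j and for the product of the 1/w_j - 1. Reducing the fraction
   (t_(j-1) - s_(j-1)) / (a_j t_(j-1)) shows t_j = alpha_j t_(j-1), so the t_j form a divisibility
   chain. In the group ring Lambda_m is the indicator of the m-th roots of unity, and for f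
   supported on the T-th roots of unity f Lambda_T = eps(f) Lambda_T and f Lambda_1 = f, where eps
   is the augmentation. So the partial products satisfy
   P_(k+1) = eps(P_k)/s_(k+1) Lambda_(t_(k+1)) - P_k  with  eps(P_k) = prod_(i<=k) (t_i/s_i - 1),
   and unrolling this alternating recursion gives the stated sums. *)

lemma rho_Nil: "rho [] = 1"
  by (simp add: rho_def)

lemma rho_Cons: "rho (x # xs) = x * prod_list xs - rho xs"
proof -
  have "rho (x # xs) = x * prod_list xs
      + (\<Sum>i<length xs. (-1)^Suc i * prod_list (drop i xs)) + (-1)^Suc (length xs)"
    unfolding rho_def by (simp only: length_Cons sum.lessThan_Suc_shift) simp
  then show ?thesis
    by (simp add: rho_def sum_negf)
qed

definition rho_rev :: "(nat \<Rightarrow> nat) \<Rightarrow> nat \<Rightarrow> int" where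
  "rho_rev a k = rho (map (\<lambda>i. int (a i)) (rev [1..<Suc k]))"

lemma rho_rev_0 [simp]: "rho_rev a 0 = 1"
  by (simp add: rho_rev_def rho_Nil)

lemma rho_rev_Suc: "rho_rev a (Suc k) = int (\<Prod>i=1..Suc k. a i) - rho_rev a k"
proof -
  have "prod_list (map (\<lambda>i. int (a i)) (rev [1..<Suc k])) = (\<Prod>i=1..k. int (a i))"
    by (metis rev_map prod_list.rev atLeastLessThanSuc_atLeastAtMost distinct_upt
        prod.distinct_set_conv_list set_upt)
  then show ?thesis
    by (simp add: rho_rev_def rho_Cons prod.cl_ivl_Suc)
qed

lemma recurrence_step:
  fixes w :: "nat \<Rightarrow> 'a::comm_ring_1"
  assumes "\<forall>j\<in>{1..n}. of_nat (a j) * w j + w (j - 1) = 1" "Suc k \<le> n"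
  shows "of_nat (a (Suc k)) * w (Suc k) = 1 - w k"
  using bspec[OF assms(1), of "Suc k"] assms(2) by (simp add: eq_diff_eq)

lemma recurrence_solution_unique:
  fixes w w' :: "nat \<Rightarrow> 'a::field_char_0"
  assumes "\<forall>j\<in>{1..n}. a j \<noteq> 0"
    and "w' 0 = w 0"
    and "\<forall>j\<in>{1..n}. of_nat (a j) * w j + w (j - 1) = 1"
    and "\<forall>j\<in>{1..n}. of_nat (a j) * w' j + w' (j - 1) = 1"
  shows "\<forall>j\<in>{1..n}. w' j = w j"
proof -
  have "w' k = w k" if "k \<le> n" for k
    using that
  proof (induction k)
    case (Suc k)
    have "of_nat (a (Suc k)) * w' (Suc k) = of_nat (a (Suc k)) * w (Suc k)"
      using recurrence_step[OF assms(3) Suc.prems] recurrence_step[OF assms(4) Suc.prems] Suc.IH Suc.prems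
      by simp
    moreover have "a (Suc k) \<noteq> 0"
      using assms(1) Suc.prems by simp
    ultimately show ?case
      by simp
  qed (use assms(2) in simp)
  then show ?thesis
    by simp
qed

primrec recurrence_solution :: "(nat \<Rightarrow> nat) \<Rightarrow> 'a::field \<Rightarrow> nat \<Rightarrow> 'a" where
  "recurrence_solution a x 0 = x"
| "recurrence_solution a x (Suc j) = (1 - recurrence_solution a x j) / of_nat (a (Suc j))"

lemma recurrence_solution_in_unit_interval:
  fixes x :: "'a::linordered_field"
  assumes "\<forall>j\<in>{1..n}. 1 \<le> a j" "0 < x" "x < 1" "j \<le> n"
  shows "0 < recurrence_solution a x j \<and> recurrence_solution a x j < 1"
  using assms(4)
proof (induction j)
  case (Suc j)
  let ?y = "1 - recurrence_solution a x j"
  have y: "0 < ?y" "?y < 1" and a1: "1 \<le> (of_nat (a (Suc j)) :: 'a)"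
    using Suc assms(1) by auto
  then have "?y / of_nat (a (Suc j)) \<le> ?y"
    by (simp add: divide_le_eq mult_le_cancel_left1)
  moreover have "0 < ?y / of_nat (a (Suc j))"
    using y a1 by simp
  ultimately show ?case
    using y by simp
qed (use assms in simp)

lemma recurrence_solution_rec:
  fixes x :: "'a::field_char_0"
  assumes "\<forall>j\<in>{1..n}. 1 \<le> a j" "j \<in> {1..n}"
  shows "of_nat (a j) * recurrence_solution a x j + recurrence_solution a x (j - 1) = 1"
proof -
  obtain k where "j = Suc k"
    using assms(2) by (cases j) auto
  with assms show ?thesis
    by force
qed

lemma recurrence_unique_solution:
  fixes a :: "nat \<Rightarrow> nat" and x :: "'a::linordered_field"
  assumes "\<forall>j\<in>{1..n}. 1 \<le> a j" "0 < x" "x < 1"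
  shows "\<exists>w. w 0 = x \<and> (\<forall>j\<in>{1..n}. 0 < w j \<and> w j < 1 \<and> of_nat (a j) * w j + w (j - 1) = 1) \<and>
    (\<forall>w'. (w' 0 = x \<and> (\<forall>j\<in>{1..n}. 0 < w' j \<and> w' j < 1 \<and> of_nat (a j) * w' j + w' (j - 1) = 1))
      \<longrightarrow> (\<forall>j\<in>{1..n}. w' j = w j))"
proof (intro exI conjI allI impI)
  let ?w = "recurrence_solution a x"
  have rec: "\<forall>j\<in>{1..n}. of_nat (a j) * ?w j + ?w (j - 1) = 1"
    using recurrence_solution_rec[OF assms(1)] by blast
  have "\<forall>j\<in>{1..n}. 0 < ?w j \<and> ?w j < 1"
    using recurrence_solution_in_unit_interval[OF assms] by simp
  with rec show "\<forall>j\<in>{1..n}. 0 < ?w j \<and> ?w j < 1 \<and> of_nat (a j) * ?w j + ?w (j - 1) = 1"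
    by blast
  show "?w 0 = x"
    by simp
  have nonzero: "\<forall>j\<in>{1..n}. a j \<noteq> 0"
    using assms(1) by (auto simp: Suc_le_eq)
  fix w'
  assume w': "w' 0 = x \<and> (\<forall>j\<in>{1..n}. 0 < w' j \<and> w' j < 1 \<and> of_nat (a j) * w' j + w' (j - 1) = 1)"
  then have "\<forall>j\<in>{1..n}. of_nat (a j) * w' j + w' (j - 1) = 1"
    by blast
  then show "\<forall>j\<in>{1..n}. w' j = ?w j"
    using recurrence_solution_unique[OF nonzero _ rec] w' by simp
qed

lemma recurrence_weighted_complement:
  fixes w :: "nat \<Rightarrow> 'a::comm_ring_1"
  assumes "\<forall>j\<in>{1..n}. of_nat (a j) * w j + w (j - 1) = 1" "k \<le> n"
  shows "of_nat (\<Prod>i=1..k. a i) * (1 - w k) = of_int (rho_rev a k) - (-1)^k * w 0"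
  using assms(2)
proof (induction k)
  case (Suc k)
  have "of_nat (\<Prod>i=1..Suc k. a i) * (1 - w (Suc k))
      = of_nat (\<Prod>i=1..Suc k. a i) - of_nat (\<Prod>i=1..k. a i) * (of_nat (a (Suc k)) * w (Suc k))"
    by (simp add: prod.cl_ivl_Suc algebra_simps)
  then have "of_nat (\<Prod>i=1..Suc k. a i) * (1 - w (Suc k))
      = of_nat (\<Prod>i=1..Suc k. a i) - of_nat (\<Prod>i=1..k. a i) * (1 - w k)"
    by (simp only: recurrence_step[OF assms(1) Suc.prems])
  with Suc show ?case
    by (simp add: rho_rev_Suc)
qed simp

lemma recurrence_weighted_value:
  fixes w :: "nat \<Rightarrow> 'a::comm_ring_1"
  assumes "\<forall>j\<in>{1..n}. of_nat (a j) * w j + w (j - 1) = 1" "j \<in> {1..n}"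
  shows "of_nat (\<Prod>i=1..j. a i) * w j = of_int (rho_rev a (j - 1)) + (-1)^j * w 0"
proof -
  obtain k where k: "j = Suc k" "Suc k \<le> n"
    using assms(2) by (cases j) auto
  have "of_nat (\<Prod>i=1..j. a i) * w j = of_nat (\<Prod>i=1..k. a i) * (1 - w k)"
    using recurrence_step[OF assms(1), of k] k by (simp add: prod.cl_ivl_Suc mult.assoc)
  then show ?thesis
    using recurrence_weighted_complement[OF assms(1) Suc_leD[OF k(2)]] k(1) by simp
qed

lemma recurrence_prod_inverse_minus_one:
  fixes w :: "nat \<Rightarrow> 'a::field"
  assumes "\<forall>j\<in>{1..n}. of_nat (a j) * w j + w (j - 1) = 1"
    and "\<forall>j\<in>{1..n}. w j \<noteq> 0" "w 0 \<noteq> 1" "k \<le> n"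
  shows "(\<Prod>j=1..k. 1 / w j - 1) = of_nat (\<Prod>i=1..k. a i) * (1 - w k) / (1 - w 0)"
  using assms(4)
proof (induction k)
  case (Suc k)
  have "w (Suc k) \<noteq> 0"
    using assms(2) Suc.prems by simp
  have "(\<Prod>j=1..Suc k. 1 / w j - 1)
      = of_nat (\<Prod>i=1..k. a i) * (1 - w k) / (1 - w 0) * (1 / w (Suc k) - 1)"
    using Suc by (simp add: prod.cl_ivl_Suc)
  also have "\<dots> = of_nat (\<Prod>i=1..k. a i) * (of_nat (a (Suc k)) * w (Suc k)) / (1 - w 0)
      * ((1 - w (Suc k)) / w (Suc k))"
    using \<open>w (Suc k) \<noteq> 0\<close> by (simp add: recurrence_step[OF assms(1) Suc.prems] diff_divide_distrib)
  also have "\<dots> = of_nat (\<Prod>i=1..Suc k. a i) * (1 - w (Suc k)) / (1 - w 0)"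
    using \<open>w (Suc k) \<noteq> 0\<close> by (simp add: prod.cl_ivl_Suc)
  finally show ?case .
qed (use assms(3) in simp)

lemma reduced_denominator_of_recurrence_step:
  fixes s' t' a s t :: nat
  assumes "s' < t'" "coprime s' t'" "0 < a" "0 < t" "coprime s t"
    and "of_nat a * (of_nat s / of_nat t) + of_nat s' / of_nat t' = (1::rat)"
  shows "t = (a div gcd (t' - s') a) * t'"
proof -
  define g where "g = gcd (t' - s') a"
  define p where "p = (t' - s') div g"
  define q where "q = (a div g) * t'"
  have "g dvd t' - s'" "g dvd a" "0 < g"
    using assms(3) by (simp_all add: g_def)
  then have pg: "t' - s' = p * g" and qg: "a * t' = q * g"
    by (simp_all add: p_def q_def)
  have "coprime (t' - s') t'"
    using assms(1,2) by (simp add: coprime_iff_gcd_eq_1 gcd_diff2_nat)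
  then have "coprime p t'"
    using pg by simp
  moreover have "coprime p (a div g)"
    unfolding p_def g_def using assms(3) by (intro div_gcd_coprime) simp
  ultimately have "coprime p q"
    by (simp add: q_def)
  have "(of_nat s / of_nat t :: rat) = of_nat (t' - s') / (of_nat a * of_nat t')"
    using assms(1,3,6) by (simp add: field_simps of_nat_diff)
  also have "\<dots> = of_nat (p * g) / of_nat (q * g)"
    by (simp only: pg flip: qg of_nat_mult)
  also have "\<dots> = of_nat p / of_nat q"
    using \<open>0 < g\<close> by simp
  finally have "(of_nat s / of_nat t :: rat) = of_nat p / of_nat q" .
  moreover have "q \<noteq> 0"
    using qg assms(1,3) by (metis gr_implies_not0 mult_is_0)
  ultimately have "of_nat (s * q) = (of_nat (p * t) :: rat)"
    using assms(4) by (simp add: field_simps)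
  then have "s * q = p * t"
    by (simp only: of_nat_eq_iff)
  then show ?thesis
    using coprime_crossproduct_nat[OF assms(5) \<open>coprime p q\<close>] by (simp add: q_def g_def)
qed

lemma sum_fun_apply: "sum F A x = (\<Sum>j\<in>A. F j x)"
  by (induction A rule: infinite_finite_induct) auto

definition roots_ind :: "nat \<Rightarrow> grp_ring" where
  "roots_ind m = (\<lambda>z. if z ^ m = 1 then 1 else 0)"

definition gr_supported :: "grp_ring \<Rightarrow> nat \<Rightarrow> bool" where
  "gr_supported f M \<longleftrightarrow> (\<forall>z. z ^ M \<noteq> 1 \<longrightarrow> f z = 0)"

(* On elements supported on the M-th roots of unity this is the augmentation. *)
definition gr_mass :: "nat \<Rightarrow> grp_ring \<Rightarrow> rat" where
  "gr_mass M f = (\<Sum>z\<in>{z. z ^ M = 1}. f z)"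

lemma Lambda_eq_roots_ind:
  assumes "0 < m"
  shows "Lambda m = roots_ind m"
proof
  fix z
  have "Lambda m z = (\<Sum>k<m. if z = cis (2 * pi * real k / real m) then 1 else 0)"
    unfolding Lambda_def gr_basis_def
    by (simp add: sum_fun_apply cis_conv_exp mult_ac)
  also have "\<dots> = (\<Sum>u\<in>{u. u ^ m = 1}. if z = u then 1 else 0)"
    using bij_betw_roots_unity[OF assms] by (rule sum.reindex_bij_betw)
  also have "\<dots> = roots_ind m z"
    using finite_roots_unity[of m] assms by (subst sum.delta') (auto simp: roots_ind_def)
  finally show "Lambda m z = roots_ind m z" .
qed

lemma gr_basis_one_eq_roots_ind: "gr_basis 1 = roots_ind 1"
  by (auto simp: gr_basis_def roots_ind_def)

lemma gr_supported_mono: "gr_supported f m \<Longrightarrow> m dvd M \<Longrightarrow> gr_supported f M"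
  unfolding gr_supported_def by (metis dvdE power_mult power_one)

lemma gr_supported_roots_ind: "m dvd M \<Longrightarrow> gr_supported (roots_ind m) M"
  by (auto simp: gr_supported_def roots_ind_def power_mult elim!: dvdE)

lemma gr_supported_diff_smult:
  "gr_supported f M \<Longrightarrow> gr_supported g M \<Longrightarrow> gr_supported (gr_smult c f - g) M"
  by (auto simp: gr_supported_def gr_smult_def)

lemma gr_mass_diff_smult: "gr_mass M (gr_smult c f - g) = c * gr_mass M f - gr_mass M g"
  by (simp add: gr_mass_def gr_smult_def sum_subtractf sum_distrib_left)

lemma gr_mass_supported:
  assumes "gr_supported f m" "m dvd M" "0 < M"
  shows "gr_mass M f = gr_mass m f"
proof -
  have "0 < m"
    using assms(2,3) by (auto intro: Nat.gr0I)
  have "{z::complex. z ^ m = 1} \<subseteq> {z. z ^ M = 1}"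
    using assms(2) by (auto simp: power_mult elim!: dvdE)
  then show ?thesis
    unfolding gr_mass_def using assms(1,3) finite_roots_unity[of M]
    by (intro sum.mono_neutral_right) (auto simp: gr_supported_def)
qed

lemma gr_mass_roots_ind:
  assumes "0 < m"
  shows "gr_mass m (roots_ind m) = of_nat m"
  using card_roots_unity_eq[OF assms] by (simp add: gr_mass_def roots_ind_def)

lemma gr_mult_supported_eq:
  assumes "gr_supported f M" "0 < M"
  shows "gr_mult f g z = (\<Sum>x\<in>{x. x ^ M = 1}. f x * g (z / x))"
  unfolding gr_mult_def using assms finite_roots_unity[of M]
  by (intro sum.mono_neutral_left) (auto simp: gr_supported_def)

lemma gr_mult_roots_ind:
  assumes "gr_supported f M" "0 < M"
  shows "gr_mult f (roots_ind M) = gr_smult (gr_mass M f) (roots_ind M)"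
proof
  fix z
  have "gr_mult f (roots_ind M) z = (\<Sum>x\<in>{x. x ^ M = 1}. f x * roots_ind M z)"
    unfolding gr_mult_supported_eq[OF assms]
    by (intro sum.cong) (auto simp: roots_ind_def power_divide)
  then show "gr_mult f (roots_ind M) z = gr_smult (gr_mass M f) (roots_ind M) z"
    by (simp add: gr_smult_def gr_mass_def sum_distrib_right)
qed

lemma gr_mult_roots_ind_one:
  assumes "gr_supported f M" "0 < M"
  shows "gr_mult f (roots_ind 1) = f"
proof
  fix z
  have "gr_mult f (roots_ind 1) z = (\<Sum>x\<in>{x. x ^ M = 1}. if z = x then f x else 0)"
    unfolding gr_mult_supported_eq[OF assms]
    by (intro sum.cong) (use assms in \<open>auto simp: roots_ind_def power_0_left\<close>)
  also have "\<dots> = f z"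
    using assms finite_roots_unity[of M] by (subst sum.delta') (auto simp: gr_supported_def)
  finally show "gr_mult f (roots_ind 1) z = f z" .
qed

lemma gr_mult_diff_smult:
  "gr_mult f (gr_smult c g - h) = gr_smult c (gr_mult f g) - gr_mult f h"
  by (auto simp: fun_eq_iff gr_mult_def gr_smult_def sum_subtractf sum_distrib_left algebra_simps)

lemma gr_alternating_recursion:
  assumes "F 0 = u" "\<And>k. k < n \<Longrightarrow> F (Suc k) = gr_smult (c (Suc k)) (g (Suc k)) - F k"
  shows "F n = gr_smult ((-1)^n) u + (\<Sum>j=1..n. gr_smult ((-1)^(n - j) * c j) (g j))"
  using assms(2)
proof (induction n)
  case (Suc n)
  have "(\<Sum>j=1..Suc n. gr_smult ((-1)^(Suc n - j) * c j) (g j))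
      = gr_smult (c (Suc n)) (g (Suc n)) - (\<Sum>j=1..n. gr_smult ((-1)^(n - j) * c j) (g j))"
    by (simp add: sum_negf[symmetric] Suc_diff_le gr_smult_def fun_eq_iff sum_fun_apply)
  with Suc show ?case
    by (simp add: gr_smult_def fun_eq_iff)
qed (use assms(1) in \<open>simp add: gr_smult_def\<close>)

lemma gr_smult_smult: "gr_smult c (gr_smult d f) = gr_smult (c * d) f"
  by (simp add: gr_smult_def fun_eq_iff)

lemma gr_mult_roots_ind_step:
  assumes "gr_supported f T" "0 < T"
  shows "gr_mult f (gr_smult c (roots_ind T) - roots_ind 1)
    = gr_smult (c * gr_mass T f) (roots_ind T) - f"
  by (simp only: gr_mult_diff_smult gr_mult_roots_ind[OF assms] gr_mult_roots_ind_one[OF assms]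
      gr_smult_smult)

lemma gr_prod_cong: "(\<And>j. j \<in> {1..n} \<Longrightarrow> F j = G j) \<Longrightarrow> gr_prod F n = gr_prod G n"
  by (induction n) auto

lemma gr_prod_roots_ind_invariant:
  fixes s t :: "nat \<Rightarrow> nat"
  defines "P \<equiv> gr_prod (\<lambda>j. gr_smult (1 / of_nat (s j)) (roots_ind (t j)) - roots_ind 1)"
  assumes "\<forall>j\<le>n. 0 < t j" "\<forall>j<n. t j dvd t (Suc j)" "k \<le> n"
  shows "gr_supported (P k) (t k) \<and> gr_mass (t k) (P k) = (\<Prod>i=1..k. of_nat (t i) / of_nat (s i) - 1)"
  using assms(4)
proof (induction k)
  case 0
  have "gr_mass (t 0) (roots_ind 1) = 1"
    using gr_mass_supported[OF gr_supported_roots_ind[of 1 1] one_dvd, of "t 0"] assms(2)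
      gr_mass_roots_ind[of 1] by simp
  then show ?case
    by (simp add: P_def gr_basis_one_eq_roots_ind gr_supported_roots_ind)
next
  case (Suc k)
  let ?T = "t (Suc k)"
  have T: "0 < ?T" "t k dvd ?T"
    using assms(2,3) Suc.prems by auto
  have IH: "gr_supported (P k) (t k)" "gr_mass (t k) (P k) = (\<Prod>i=1..k. of_nat (t i) / of_nat (s i) - 1)"
    using Suc by simp_all
  have supp: "gr_supported (P k) ?T"
    using gr_supported_mono[OF IH(1) T(2)] .
  have mass: "gr_mass ?T (P k) = (\<Prod>i=1..k. of_nat (t i) / of_nat (s i) - 1)"
    using gr_mass_supported[OF IH(1) T(2,1)] IH(2) by simp
  have P_Suc: "P (Suc k) = gr_smult (1 / of_nat (s (Suc k)) * gr_mass ?T (P k)) (roots_ind ?T) - P k"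
    using gr_mult_roots_ind_step[OF supp T(1)] by (simp add: P_def)
  have "gr_supported (P (Suc k)) ?T"
    unfolding P_Suc using supp by (intro gr_supported_diff_smult gr_supported_roots_ind) simp_all
  moreover have "gr_mass ?T (P (Suc k)) = (\<Prod>i=1..Suc k. of_nat (t i) / of_nat (s i) - 1)"
    unfolding P_Suc gr_mass_diff_smult gr_mass_roots_ind[OF T(1)] mass
    by (simp add: prod.cl_ivl_Suc algebra_simps)
  ultimately show ?case
    by simp
qed

lemma gr_prod_roots_ind_recursion:
  fixes s t :: "nat \<Rightarrow> nat"
  defines "P \<equiv> gr_prod (\<lambda>j. gr_smult (1 / of_nat (s j)) (roots_ind (t j)) - roots_ind 1)"
  assumes "\<forall>j\<le>n. 0 < t j" "\<forall>j<n. t j dvd t (Suc j)" "k < n"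
  shows "P (Suc k) = gr_smult ((\<Prod>i=1..k. of_nat (t i) / of_nat (s i) - 1) / of_nat (s (Suc k)))
    (roots_ind (t (Suc k))) - P k"
proof -
  have IH: "gr_supported (P k) (t k)" "gr_mass (t k) (P k) = (\<Prod>i=1..k. of_nat (t i) / of_nat (s i) - 1)"
    using gr_prod_roots_ind_invariant[OF assms(2,3), of k s] assms(4) by (simp_all add: P_def)
  have T: "0 < t (Suc k)" "t k dvd t (Suc k)"
    using assms(2,3,4) by auto
  have "P (Suc k) = gr_mult (P k) (gr_smult (1 / of_nat (s (Suc k))) (roots_ind (t (Suc k))) - roots_ind 1)"
    by (simp add: P_def)
  also have "\<dots> = gr_smult (1 / of_nat (s (Suc k)) * gr_mass (t (Suc k)) (P k)) (roots_ind (t (Suc k))) - P k"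
    using gr_mult_roots_ind_step[OF gr_supported_mono[OF IH(1) T(2)] T(1)] .
  finally show ?thesis
    using gr_mass_supported[OF IH(1) T(2,1)] IH(2) by simp
qed

lemma gr_prod_Lambda_closed_form:
  fixes s t :: "nat \<Rightarrow> nat"
  assumes "\<forall>j\<le>n. 0 < t j" "\<forall>j<n. t j dvd t (Suc j)"
  shows "gr_prod (\<lambda>j. gr_smult (1 / of_nat (s j)) (Lambda (t j)) - Lambda 1) n
    = gr_smult ((-1)^n) (Lambda 1) + (\<Sum>j=1..n. gr_smult ((-1)^(n - j)
        * ((\<Prod>i=1..j-1. of_nat (t i) / of_nat (s i) - 1) / of_nat (s j))) (Lambda (t j)))"
proof -
  have Lambda_t: "Lambda (t j) = roots_ind (t j)" if "j \<le> n" for j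
    using assms(1) that by (simp add: Lambda_eq_roots_ind)
  have Lambda_1: "Lambda 1 = roots_ind 1"
    by (simp add: Lambda_eq_roots_ind)
  have sum_Lambda: "(\<Sum>j=1..n. gr_smult (c j) (Lambda (t j))) = (\<Sum>j=1..n. gr_smult (c j) (roots_ind (t j)))"
    for c
    using Lambda_t by (intro sum.cong) auto
  have "gr_prod (\<lambda>j. gr_smult (1 / of_nat (s j)) (Lambda (t j)) - Lambda 1) n
    = gr_prod (\<lambda>j. gr_smult (1 / of_nat (s j)) (roots_ind (t j)) - roots_ind 1) n"
    unfolding Lambda_1 using Lambda_t by (intro gr_prod_cong) simp
  also have "\<dots> = gr_smult ((-1)^n) (roots_ind 1) + (\<Sum>j=1..n. gr_smult ((-1)^(n - j)
        * ((\<Prod>i=1..j-1. of_nat (t i) / of_nat (s i) - 1) / of_nat (s j))) (roots_ind (t j)))"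
    by (intro gr_alternating_recursion)
      (simp_all only: gr_prod_roots_ind_recursion[OF assms] gr_prod.simps(1) gr_basis_one_eq_roots_ind
        diff_Suc_1)
  finally show ?thesis
    unfolding Lambda_1 sum_Lambda .
qed

locale reduced_recurrence_chain =
  fixes n :: nat and a :: "nat \<Rightarrow> nat" and s0 t0 :: nat and w :: "nat \<Rightarrow> rat" and s t :: "nat \<Rightarrow> nat"
  assumes a_pos: "\<forall>j\<in>{1..n}. 1 \<le> a j"
    and s0_lt_t0: "s0 < t0"
    and coprime_s0_t0: "coprime s0 t0"
    and w_0: "w 0 = of_nat s0 / of_nat t0"
    and w_rec: "\<forall>j\<in>{1..n}. 0 < w j \<and> w j < 1 \<and> of_nat (a j) * w j + w (j - 1) = 1"
    and s_0: "s 0 = s0" and t_0: "t 0 = t0"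
    and w_eq_frac: "\<forall>j\<in>{1..n}. 0 < t j \<and> coprime (s j) (t j) \<and> w j = of_nat (s j) / of_nat (t j)"
begin

definition beta :: "nat \<Rightarrow> nat" where
  "beta j = gcd (t (j - 1) - s (j - 1)) (a j)"

definition alpha :: "nat \<Rightarrow> nat" where
  "alpha j = a j div beta j"

lemma a_gt_0: "i \<in> {1..n} \<Longrightarrow> 0 < a i"
  using a_pos by (auto simp: Suc_le_eq)

lemma recurrence: "\<forall>j\<in>{1..n}. of_nat (a j) * w j + w (j - 1) = 1"
  using w_rec by blast

lemma reduced_fraction:
  assumes "j \<le> n"
  shows "0 < t j \<and> s j < t j \<and> coprime (s j) (t j) \<and> w j = of_nat (s j) / of_nat (t j)"
proof (cases j)
  case 0
  then show ?thesis
    using s0_lt_t0 coprime_s0_t0 w_0 s_0 t_0 by simp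
next
  case (Suc k)
  then have "0 < t j" "coprime (s j) (t j)" "w j = of_nat (s j) / of_nat (t j)" "w j < 1"
    using assms w_eq_frac w_rec by auto
  then show ?thesis
    by (simp add: divide_less_eq)
qed

lemma w_ne_0: "\<forall>j\<in>{1..n}. w j \<noteq> 0"
  using w_rec by fastforce

lemma w_0_lt_1: "w 0 < 1"
  using w_0 s0_lt_t0 by (simp add: divide_less_eq)

lemma t_eq_alpha_mult:
  assumes "j \<in> {1..n}"
  shows "t j = alpha j * t (j - 1)"
proof -
  have "w j = of_nat (s j) / of_nat (t j)" "w (j - 1) = of_nat (s (j - 1)) / of_nat (t (j - 1))"
    using assms reduced_fraction[of j] reduced_fraction[of "j - 1"] by auto
  moreover have "of_nat (a j) * w j + w (j - 1) = 1"
    using assms recurrence by blast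
  ultimately have "of_nat (a j) * (of_nat (s j) / of_nat (t j)) + of_nat (s (j - 1)) / of_nat (t (j - 1)) = (1::rat)"
    by simp
  then show ?thesis
    unfolding alpha_def beta_def
    using assms a_gt_0[OF assms] reduced_fraction[of j] reduced_fraction[of "j - 1"]
    by (intro reduced_denominator_of_recurrence_step) auto
qed

lemma t_eq_prod_alpha: "j \<le> n \<Longrightarrow> t j = (\<Prod>i=1..j. alpha i) * t0"
  by (induction j) (simp_all add: t_0 t_eq_alpha_mult prod.cl_ivl_Suc)

lemma t_pos: "\<forall>j\<le>n. 0 < t j"
  using reduced_fraction by blast

lemma t_dvd_t_Suc: "\<forall>j<n. t j dvd t (Suc j)"
  using t_eq_alpha_mult by simp

lemma prod_beta_mult_t: "j \<le> n \<Longrightarrow> (\<Prod>i=1..j. beta i) * t j = (\<Prod>i=1..j. a i) * t0"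
proof (induction j)
  case (Suc j)
  have "alpha (Suc j) * beta (Suc j) = a (Suc j)"
    using a_gt_0[of "Suc j"] Suc.prems by (simp add: alpha_def beta_def)
  then have "(\<Prod>i=1..Suc j. beta i) * t (Suc j) = a (Suc j) * ((\<Prod>i=1..j. beta i) * t j)"
    using t_eq_alpha_mult[of "Suc j"] Suc.prems by (simp add: prod.cl_ivl_Suc ac_simps)
  with Suc show ?case
    by (simp add: prod.cl_ivl_Suc ac_simps)
qed (simp add: t_0)

lemma s_eq:
  assumes "j \<in> {1..n}"
  shows "of_nat (s j) = of_int (rho_rev a (j - 1) * int t0 + (-1)^j * int s0) / (of_nat (\<Prod>i=1..j. beta i) :: rat)"
proof -
  have "0 < (\<Prod>i=1..j. beta i)"
    using assms by (intro prod_pos) (simp add: beta_def a_gt_0)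
  have "0 < t0"
    using s0_lt_t0 by simp
  have B: "(of_nat (\<Prod>i=1..j. beta i) :: rat) * of_nat (t j) = of_nat (\<Prod>i=1..j. a i) * of_nat t0"
    using prod_beta_mult_t[of j] assms by (metis atLeastAtMost_iff of_nat_mult)
  have "0 < t j" "w j = of_nat (s j) / of_nat (t j)"
    using reduced_fraction[of j] assms by auto
  then have "of_nat (\<Prod>i=1..j. beta i) * of_nat (s j)
      = (of_nat (\<Prod>i=1..j. beta i) * of_nat (t j)) * w j"
    by simp
  also have "\<dots> = of_nat (\<Prod>i=1..j. a i) * w j * of_nat t0"
    unfolding B by simp
  also have "\<dots> = of_int (rho_rev a (j - 1) * int t0 + (-1)^j * int s0)"
    using recurrence_weighted_value[OF recurrence assms] w_0 \<open>0 < t0\<close> by (simp add: field_simps)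
  finally show ?thesis
    using \<open>0 < (\<Prod>i=1..j. beta i)\<close> by (simp add: eq_divide_eq mult.commute)
qed

lemma prod_inverse_w_minus_one:
  "(\<Prod>j=1..n. 1 / w j - 1) = (of_int (rho_rev a n) - (-1)^n * w 0) / (1 - w 0)"
  using recurrence_prod_inverse_minus_one[OF recurrence w_ne_0 _ order_refl] w_0_lt_1
    recurrence_weighted_complement[OF recurrence order_refl]
  by simp

lemma gr_prod_coefficient:
  assumes "j \<in> {1..n}"
  shows "(\<Prod>i=1..j-1. of_nat (t i) / of_nat (s i) - 1) / of_nat (s j)
    = of_nat (\<Prod>i=1..j. a i) / ((1 - w 0) * of_nat (t j))"
proof -
  obtain k where k: "j = Suc k" "Suc k \<le> n"
    using assms by (cases j) auto
  have "(\<Prod>i=1..k. of_nat (t i) / of_nat (s i) - 1) = (\<Prod>i=1..k. 1 / w i - 1)"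
    using reduced_fraction k(2) by (intro prod.cong) auto
  also have "\<dots> = of_nat (\<Prod>i=1..k. a i) * (of_nat (a j) * w j) / (1 - w 0)"
    using recurrence_prod_inverse_minus_one[OF recurrence w_ne_0 _ Suc_leD[OF k(2)]] w_0_lt_1
      recurrence_step[OF recurrence k(2)] k(1) by simp
  finally have "(\<Prod>i=1..j-1. of_nat (t i) / of_nat (s i) - 1)
      = of_nat (\<Prod>i=1..j. a i) * w j / (1 - w 0)"
    using k(1) by (simp add: prod.cl_ivl_Suc mult.assoc)
  moreover have w_j: "w j = of_nat (s j) / of_nat (t j)"
    using reduced_fraction[of j] assms by auto
  moreover have "s j \<noteq> 0"
    using w_ne_0 assms w_j by force
  ultimately show ?thesis
    by simp
qed

lemma E_one: "E 1 = Lambda 1"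
  by (simp add: E_def gr_smult_def)

lemma gr_prod_eq_E_sum:
  "gr_prod (\<lambda>j. gr_smult (1 / of_nat (s j)) (Lambda (t j)) - Lambda 1) n
    = gr_smult ((-1)^n) (E 1)
      + (\<Sum>j=1..n. gr_smult ((-1)^(n - j) * of_nat (\<Prod>i=1..j. a i) / (1 - w 0)) (E (t j)))"
proof -
  have term_eq: "gr_smult ((-1)^(n - j) * ((\<Prod>i=1..j-1. of_nat (t i) / of_nat (s i) - 1) / of_nat (s j)))
      (Lambda (t j)) = gr_smult ((-1)^(n - j) * of_nat (\<Prod>i=1..j. a i) / (1 - w 0)) (E (t j))"
    if "j \<in> {1..n}" for j
    using gr_prod_coefficient[OF that] by (simp add: E_def gr_smult_smult)
  show ?thesis
    unfolding gr_prod_Lambda_closed_form[OF t_pos t_dvd_t_Suc] E_one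
    by (intro arg_cong[where f = "(+) _"] sum.cong refl term_eq)
qed

lemma gr_prod_eq_Lambda_sum:
  "gr_prod (\<lambda>j. gr_smult (1 / of_nat (s j)) (Lambda (t j)) - Lambda 1) n
    = gr_smult ((-1)^n) (Lambda 1)
      + (\<Sum>j=1..n. gr_smult ((-1)^(n - j) * of_nat (\<Prod>i=1..j. beta i) / (of_nat t0 - of_nat s0))
          (Lambda (t j)))"
proof -
  have coefficient_eq: "(\<Prod>i=1..j-1. of_nat (t i) / of_nat (s i) - 1) / of_nat (s j)
      = (of_nat (\<Prod>i=1..j. beta i) / (of_nat t0 - of_nat s0) :: rat)"
    if "j \<in> {1..n}" for j
  proof -
    have "(of_nat (\<Prod>i=1..j. beta i) :: rat) * of_nat (t j) = of_nat (\<Prod>i=1..j. a i) * of_nat t0"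
      using prod_beta_mult_t[of j] that by (metis atLeastAtMost_iff of_nat_mult)
    moreover have "0 < t j" "(0::rat) < of_nat t0 - of_nat s0"
      using t_pos that s0_lt_t0 by auto
    ultimately show ?thesis
      unfolding gr_prod_coefficient[OF that] w_0 by (simp add: field_simps)
  qed
  show ?thesis
    unfolding gr_prod_Lambda_closed_form[OF t_pos t_dvd_t_Suc]
    by (intro arg_cong[where f = "(+) _"] sum.cong refl) (simp only: coefficient_eq times_divide_eq_right)
qed

end

theorem lemma4p2:
  fixes n :: nat and a :: "nat \<Rightarrow> nat" and s0 t0 :: nat
  assumes n_pos: "1 \<le> n"
    and a_pos: "\<forall>j\<in>{1..n}. 1 \<le> a j"
    and s0_pos: "1 \<le> s0"
    and st0: "s0 < t0"
    and cop0: "coprime s0 t0"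
  shows
    "(\<exists>w :: nat \<Rightarrow> rat. w 0 = of_nat s0 / of_nat t0 \<and>
        (\<forall>j\<in>{1..n}. 0 < w j \<and> w j < 1 \<and> of_nat (a j) * w j + w (j - 1) = 1) \<and>
        (\<forall>w' :: nat \<Rightarrow> rat. (w' 0 = of_nat s0 / of_nat t0 \<and>
            (\<forall>j\<in>{1..n}. 0 < w' j \<and> w' j < 1 \<and> of_nat (a j) * w' j + w' (j - 1) = 1))
          \<longrightarrow> (\<forall>j\<in>{1..n}. w' j = w j)))
     \<and>
     (\<forall>(w :: nat \<Rightarrow> rat) (s :: nat \<Rightarrow> nat) (t :: nat \<Rightarrow> nat).
        (w 0 = of_nat s0 / of_nat t0 \<and>
         (\<forall>j\<in>{1..n}. 0 < w j \<and> w j < 1 \<and> of_nat (a j) * w j + w (j - 1) = 1) \<and>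
         s 0 = s0 \<and> t 0 = t0 \<and>
         (\<forall>j\<in>{1..n}. 0 < t j \<and> coprime (s j) (t j) \<and> w j = of_nat (s j) / of_nat (t j)))
        \<longrightarrow>
        (let \<beta> = (\<lambda>j. gcd (t (j - 1) - s (j - 1)) (a j));
             \<alpha> = (\<lambda>j. a j div \<beta> j)
         in
         (\<forall>j\<in>{1..n}.
            (of_nat (s j) :: rat) =
              of_int (rho (map (\<lambda>i. int (a i)) (rev [1..<j])) * int t0 + (-1)^j * int s0)
              / of_nat (\<Prod>i=1..j. \<beta> i)
          \<and> t j = \<alpha> j * t (j - 1)
          \<and> t j = (\<Prod>i=1..j. \<alpha> i) * t0)
         \<and>
         gr_prod (\<lambda>j. gr_smult (1 / of_nat (s j)) (Lambda (t j)) - Lambda 1) n =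
           gr_smult ((-1)^n) (Lambda 1)
           + (\<Sum>j=1..n. gr_smult ((-1)^(n - j) * of_nat (\<Prod>i=1..j. \<beta> i)
                                     / (of_nat t0 - of_nat s0)) (Lambda (t j)))
         \<and>
         gr_prod (\<lambda>j. gr_smult (1 / of_nat (s j)) (Lambda (t j)) - Lambda 1) n =
           gr_smult ((-1)^n) (E 1)
           + (\<Sum>j=1..n. gr_smult ((-1)^(n - j) * of_nat (\<Prod>i=1..j. a i)
                                     / (1 - w 0)) (E (t j)))
         \<and>
         (\<Prod>j=1..n. 1 / w j - 1) =
           (of_int (rho (map (\<lambda>i. int (a i)) (rev [1..<n+1]))) + (-1)^(n - 1) * w 0)
           / (1 - w 0)))"
proof (intro conjI allI impI, goal_cases)
  case 1
  have "0 < (of_nat s0 / of_nat t0 :: rat)" "(of_nat s0 / of_nat t0 :: rat) < 1"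
    using s0_pos st0 by auto
  then show ?case
    by (rule recurrence_unique_solution[OF a_pos])
next
  case (2 w s t)
  then interpret reduced_recurrence_chain n a s0 t0 w s t
    using a_pos st0 cop0 by unfold_locales auto
  show ?case
    unfolding Let_def beta_def[symmetric] alpha_def[symmetric]
  proof (intro conjI ballI, goal_cases)
    case (1 j)
    then show ?case
      using s_eq[OF 1] by (simp add: rho_rev_def)
  next
    case (2 j)
    then show ?case
      by (rule t_eq_alpha_mult)
  next
    case (3 j)
    then show ?case
      using t_eq_prod_alpha by simp
  next
    case 4
    show ?case
      by (rule gr_prod_eq_Lambda_sum)
  next
    case 5
    show ?case
      by (rule gr_prod_eq_E_sum)
  next
    case 6
    have "(-1)^(n - 1) * w 0 = - ((-1)^n * w 0)"
      using n_pos by (cases n) auto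
    then show ?case
      using prod_inverse_w_minus_one by (simp add: rho_rev_def)
  qed
qed

end
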